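(* Consider a shallow ReLU network without biases with widths $n_0,n_1,n_2$ and two activation patterns $A_1,A_2\in\{0,1\}^{n_1}$. Let $r_i=\sum_j A_{ij}$, $s=\sum_jA_{1j}A_{2j}$ and $t=r_1+r_2-2s$. Then the ideal $J^{\mathbf{A}}$ contains: (1) all $(r_1+1)$-minors of $M_1$; (2) all $(r_2+1)$-minors of $M_2$; (3) all $(n_1+1)$-minors of $[M_1\mid M_2]$ and of $[M_1^\top\mid M_2^\top]$; (4) all $(t+1)$-minors of $M_1-M_2$.
   Context: Parameters are $W^{(1)}\in\mathbb{R}^{n_1\times n_0}$, $W^{(2)}\in\mathbb{R}^{n_2\times n_1}$, and $M_{A}(\theta)=W^{(2)}\operatorname{diag}(A)W^{(1)}$. $J^{\mathbf{A}}\subseteq\mathbb{C}[m^{(1)}_{ij},m^{(2)}_{ij}]$ is the ideal of all polynomials vanishing on the Zariski closure in $\mathbb{C}^{n_2\times n_0}\times\mathbb{C}^{n_2\times n_0}$ of $\{(M_{A_1}(\theta),M_{A_2}(\theta)):\theta\}$, where $M_1=(m^{(1)}_{ij})$ and $M_2=(m^{(2)}_{ij})$ are the matrices of coordinates. $[M_1\mid M_2]$ denotes horizontal concatenation. *)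

theory Defs
  imports Complex_Main "HOL-Combinatorics.Permutations"
begin

text \<open>A point of the ambient space C^(n2 x n0) x C^(n2 x n0) is a pair of
  coordinate matrices (M1, M2), indexed by naturals (row < n2, column < n0),
  with all entries outside the index range equal to 0.\<close>

type_synonym cmat = "nat \<Rightarrow> nat \<Rightarrow> complex"
type_synonym pt = "cmat \<times> cmat"

definition ambient :: "nat \<Rightarrow> nat \<Rightarrow> pt set" where
  "ambient m n = {x. \<forall>i j. \<not> (i < m \<and> j < n) \<longrightarrow> fst x i j = 0 \<and> snd x i j = 0}"

text \<open>Polynomial functions in the coordinates m^(1)_ij, m^(2)_ij (i < m, j < n)
  with complex coefficients, i.e. the coordinate ring C[m^(1)_ij, m^(2)_ij]
  (over the infinite field C polynomials and polynomial functions coincide).\<close>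

inductive_set polyfun :: "nat \<Rightarrow> nat \<Rightarrow> (pt \<Rightarrow> complex) set" for m n where
  const: "(\<lambda>x. c) \<in> polyfun m n"
| var1: "i < m \<Longrightarrow> j < n \<Longrightarrow> (\<lambda>x. fst x i j) \<in> polyfun m n"
| var2: "i < m \<Longrightarrow> j < n \<Longrightarrow> (\<lambda>x. snd x i j) \<in> polyfun m n"
| add: "p \<in> polyfun m n \<Longrightarrow> q \<in> polyfun m n \<Longrightarrow> (\<lambda>x. p x + q x) \<in> polyfun m n"
| mult: "p \<in> polyfun m n \<Longrightarrow> q \<in> polyfun m n \<Longrightarrow> (\<lambda>x. p x * q x) \<in> polyfun m n"

definition zariski_closure :: "nat \<Rightarrow> nat \<Rightarrow> pt set \<Rightarrow> pt set" where
  "zariski_closure m n S = {x \<in> ambient m n. \<forall>p \<in> polyfun m n. (\<forall>y \<in> S. p y = 0) \<longrightarrow> p x = 0}"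

definition vanishing_ideal :: "nat \<Rightarrow> nat \<Rightarrow> pt set \<Rightarrow> (pt \<Rightarrow> complex) set" where
  "vanishing_ideal m n V = {p \<in> polyfun m n. \<forall>x \<in> V. p x = 0}"

definition netmat :: "nat \<Rightarrow> nat \<Rightarrow> nat \<Rightarrow> (nat \<Rightarrow> bool) \<Rightarrow>
    (nat \<Rightarrow> nat \<Rightarrow> real) \<Rightarrow> (nat \<Rightarrow> nat \<Rightarrow> real) \<Rightarrow> cmat" where
  "netmat n0 n1 n2 A W1 W2 = (\<lambda>i j. if i < n2 \<and> j < n0 then
      complex_of_real (\<Sum>k<n1. W2 i k * of_bool (A k) * W1 k j) else 0)"

definition param_image :: "nat \<Rightarrow> nat \<Rightarrow> nat \<Rightarrow> (nat \<Rightarrow> bool) \<Rightarrow> (nat \<Rightarrow> bool) \<Rightarrow> pt set" where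
  "param_image n0 n1 n2 A1 A2 =
     {(netmat n0 n1 n2 A1 W1 W2, netmat n0 n1 n2 A2 W1 W2) | W1 W2. True}"

definition J_ideal :: "nat \<Rightarrow> nat \<Rightarrow> nat \<Rightarrow> (nat \<Rightarrow> bool) \<Rightarrow> (nat \<Rightarrow> bool) \<Rightarrow> (pt \<Rightarrow> complex) set" where
  "J_ideal n0 n1 n2 A1 A2 =
     vanishing_ideal n2 n0 (zariski_closure n2 n0 (param_image n0 n1 n2 A1 A2))"

definition detk :: "nat \<Rightarrow> (nat \<Rightarrow> nat \<Rightarrow> complex) \<Rightarrow> complex" where
  "detk k B = (\<Sum>p | p permutes {..<k}. of_int (sign p) * (\<Prod>a<k. B a (p a)))"

definition minors :: "nat \<Rightarrow> nat \<Rightarrow> nat \<Rightarrow> (pt \<Rightarrow> nat \<Rightarrow> nat \<Rightarrow> complex) \<Rightarrow> (pt \<Rightarrow> complex) set" where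
  "minors k rows cols F =
     {(\<lambda>x. detk k (\<lambda>a b. F x (f a) (g b))) | f g.
        strict_mono_on {..<k} f \<and> f ` {..<k} \<subseteq> {..<rows} \<and>
        strict_mono_on {..<k} g \<and> g ` {..<k} \<subseteq> {..<cols}}"

definition M1 :: "pt \<Rightarrow> cmat" where "M1 x = fst x"
definition M2 :: "pt \<Rightarrow> cmat" where "M2 x = snd x"

definition hcat :: "nat \<Rightarrow> pt \<Rightarrow> cmat" where
  "hcat n0 x = (\<lambda>i j. if j < n0 then M1 x i j else M2 x i (j - n0))"

definition hcatT :: "nat \<Rightarrow> pt \<Rightarrow> cmat" where
  "hcatT n2 x = (\<lambda>i j. if j < n2 then M1 x j i else M2 x (j - n2) i)"

definition Mdiff :: "pt \<Rightarrow> cmat" where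
  "Mdiff x = (\<lambda>i j. M1 x i j - M2 x i j)"

end

theory Submission
  imports Defs "Jordan_Normal_Form.Determinant"
begin

text \<open>Every polynomial that vanishes on the parametrised set lies in J^A, so it suffices
  to show that each listed minor is a polynomial vanishing at every point
  (W2 diag(A1) W1, W2 diag(A2) W1). There the five matrices factor through few inner
  indices: M_i through the r_i active neurons, both concatenations through all n1 neurons,
  and M1 - M2 = W2 diag(A1 - A2) W1 through the t neurons where the patterns differ.
  A matrix factoring through fewer than k indices has all k-minors zero, since a
  k x k product U V with U padded by a zero column is singular.\<close>

lemma polyfun_diff:
  assumes "p \<in> polyfun m n" "q \<in> polyfun m n"
  shows "(\<lambda>x. p x - q x) \<in> polyfun m n"
proof -
  have "(\<lambda>x. p x + (\<lambda>x. -1) x * q x) \<in> polyfun m n"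
    by (intro polyfun.add polyfun.mult polyfun.const assms)
  then show ?thesis by simp
qed

lemma polyfun_sum:
  assumes "finite S" "\<And>i. i \<in> S \<Longrightarrow> (\<lambda>x. f i x) \<in> polyfun m n"
  shows "(\<lambda>x. \<Sum>i\<in>S. f i x) \<in> polyfun m n"
  using assms
proof (induction S rule: finite_induct)
  case empty
  then show ?case using polyfun.const[of 0] by simp
next
  case (insert a F)
  then have "(\<lambda>x. f a x + (\<Sum>i\<in>F. f i x)) \<in> polyfun m n"
    by (intro polyfun.add) auto
  with insert show ?case by simp
qed

lemma polyfun_prod:
  assumes "finite S" "\<And>i. i \<in> S \<Longrightarrow> (\<lambda>x. f i x) \<in> polyfun m n"
  shows "(\<lambda>x. \<Prod>i\<in>S. f i x) \<in> polyfun m n"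
  using assms
proof (induction S rule: finite_induct)
  case empty
  then show ?case using polyfun.const[of 1] by simp
next
  case (insert a F)
  then have "(\<lambda>x. f a x * (\<Prod>i\<in>F. f i x)) \<in> polyfun m n"
    by (intro polyfun.mult) auto
  with insert show ?case by simp
qed

lemma permutes_lessThan_less: "p permutes {..<k} \<Longrightarrow> a < k \<Longrightarrow> p a < k"
  using permutes_in_image by fastforce

lemma polyfun_detk:
  assumes "\<And>a b. a < k \<Longrightarrow> b < k \<Longrightarrow> (\<lambda>x. B x a b) \<in> polyfun m n"
  shows "(\<lambda>x. detk k (B x)) \<in> polyfun m n"
  unfolding detk_def
proof (rule polyfun_sum)
  show "finite {p. p permutes {..<k}}" by (simp add: finite_permutations)
  fix p assume "p \<in> {p. p permutes {..<k}}"
  then show "(\<lambda>x. of_int (sign p) * (\<Prod>a<k. B x a (p a))) \<in> polyfun m n"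
    by (intro polyfun.mult polyfun.const polyfun_prod) (auto intro: assms permutes_lessThan_less)
qed

lemma polyfun_M1: "i < m \<Longrightarrow> j < n \<Longrightarrow> (\<lambda>x. M1 x i j) \<in> polyfun m n"
  unfolding M1_def by (rule polyfun.var1)

lemma polyfun_M2: "i < m \<Longrightarrow> j < n \<Longrightarrow> (\<lambda>x. M2 x i j) \<in> polyfun m n"
  unfolding M2_def by (rule polyfun.var2)

lemma polyfun_hcat:
  assumes "i < m" "j < 2 * n"
  shows "(\<lambda>x. hcat n x i j) \<in> polyfun m n"
  using assms by (cases "j < n") (auto simp: hcat_def M1_def M2_def intro: polyfun.var1 polyfun.var2)

lemma polyfun_hcatT:
  assumes "i < n" "j < 2 * m"
  shows "(\<lambda>x. hcatT m x i j) \<in> polyfun m n"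
  using assms by (cases "j < m") (auto simp: hcatT_def M1_def M2_def intro: polyfun.var1 polyfun.var2)

lemma polyfun_Mdiff:
  assumes "i < m" "j < n"
  shows "(\<lambda>x. Mdiff x i j) \<in> polyfun m n"
  unfolding Mdiff_def M1_def M2_def using assms by (intro polyfun_diff polyfun.var1 polyfun.var2)

lemma detk_cong:
  assumes "\<And>a b. a < k \<Longrightarrow> b < k \<Longrightarrow> B a b = C a b"
  shows "detk k B = detk k C"
  unfolding detk_def
proof (rule sum.cong[OF refl])
  fix p assume "p \<in> {p. p permutes {..<k}}"
  then have "a < k \<Longrightarrow> p a < k" for a
    by (simp add: permutes_lessThan_less)
  then show "of_int (sign p) * (\<Prod>a<k. B a (p a)) = of_int (sign p) * (\<Prod>a<k. C a (p a))"
    using assms by (intro arg_cong2[where f="(*)"] prod.cong) auto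
qed

lemma detk_eq_det: "detk k B = det (mat k k (\<lambda>(a, b). B a b))"
proof -
  have "det (mat k k (\<lambda>(a, b). B a b)) = (\<Sum>p\<in>{p. p permutes {0..<k}}.
      signof p * (\<Prod>i = 0..<k. mat k k (\<lambda>(a, b). B a b) $$ (i, p i)))"
    by (rule det_def') simp
  also have "\<dots> = detk k B"
    unfolding detk_def lessThan_atLeast0[symmetric]
  proof (rule sum.cong[OF refl])
    fix p assume "p \<in> {p. p permutes {..<k}}"
    then have "a < k \<Longrightarrow> p a < k" for a
      by (simp add: permutes_lessThan_less)
    then show "signof p * (\<Prod>i<k. mat k k (\<lambda>(a, b). B a b) $$ (i, p i))
        = of_int (sign p) * (\<Prod>a<k. B a (p a))"
      by (intro arg_cong2[where f="(*)"] prod.cong) auto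
  qed
  finally show ?thesis by simp
qed

lemma detk_mult: "detk k (\<lambda>a b. \<Sum>l<k. U a l * V l b) = detk k U * detk k V"
proof -
  have "mat k k (\<lambda>(a, b). \<Sum>l<k. U a l * V l b) = mat k k (\<lambda>(a, b). U a b) * mat k k (\<lambda>(a, b). V a b)"
    by (auto simp: scalar_prod_def lessThan_atLeast0 intro!: eq_matI sum.cong)
  then show ?thesis
    unfolding detk_eq_det by (simp add: det_mult[of _ k])
qed

lemma detk_zero_column:
  assumes "c < k" "\<And>a. a < k \<Longrightarrow> U a c = 0"
  shows "detk k U = 0"
  unfolding detk_def
proof (rule sum.neutral, rule ballI)
  fix p assume "p \<in> {p. p permutes {..<k}}"
  then have p: "p permutes {..<k}" by simp
  obtain a where a: "p a = c"
    using permutes_surj[OF p] by (metis surj_def)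
  have "a < k"
    using a assms(1) p by (metis lessThan_iff permutes_not_in)
  with a assms(2) have "(\<Prod>a<k. U a (p a)) = 0"
    by (intro prod_zero) auto
  then show "of_int (sign p) * (\<Prod>a<k. U a (p a)) = 0" by simp
qed

lemma detk_mult_inner_less_eq_0:
  assumes "m < k"
  shows "detk k (\<lambda>a b. \<Sum>l<m. U a l * V l b) = 0"
proof -
  define U' where "U' a l = (if l < m then U a l else 0)" for a l
  have "detk k (\<lambda>a b. \<Sum>l<m. U a l * V l b) = detk k (\<lambda>a b. \<Sum>l<k. U' a l * V l b)"
    using assms by (intro detk_cong sum.mono_neutral_cong_left) (auto simp: U'_def)
  also have "\<dots> = detk k U' * detk k V"
    by (rule detk_mult)
  also have "detk k U' = 0"
    using assms by (intro detk_zero_column[of m]) (auto simp: U'_def)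
  finally show ?thesis by simp
qed

definition rank_less :: "nat \<Rightarrow> nat \<Rightarrow> nat \<Rightarrow> cmat \<Rightarrow> bool" where
  "rank_less k nr nc B \<longleftrightarrow> (\<exists>(T :: nat set) u v. finite T \<and> card T < k \<and>
     (\<forall>i<nr. \<forall>j<nc. B i j = (\<Sum>l\<in>T. u i l * v l j)))"

lemma rank_lessI:
  fixes T :: "nat set"
  assumes "finite T" "card T < k" "\<And>i j. i < nr \<Longrightarrow> j < nc \<Longrightarrow> B i j = (\<Sum>l\<in>T. u i l * v l j)"
  shows "rank_less k nr nc B"
  using assms unfolding rank_less_def by blast

lemma minor_eq_0_if_rank_less:
  assumes "rank_less k nr nc B"
    and "f ` {..<k} \<subseteq> {..<nr}" "g ` {..<k} \<subseteq> {..<nc}"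
  shows "detk k (\<lambda>a b. B (f a) (g b)) = 0"
proof -
  obtain T :: "nat set" and u v where T: "finite T" "card T < k"
    and B: "\<And>i j. i < nr \<Longrightarrow> j < nc \<Longrightarrow> B i j = (\<Sum>l\<in>T. u i l * v l j)"
    using assms(1) unfolding rank_less_def by blast
  obtain e where e: "bij_betw e {..<card T} T"
    using ex_bij_betw_nat_finite[OF T(1)] by (metis atLeast0LessThan)
  have "B (f a) (g b) = (\<Sum>l<card T. u (f a) (e l) * v (e l) (g b))" if "a < k" "b < k" for a b
  proof -
    have "B (f a) (g b) = (\<Sum>l\<in>T. u (f a) l * v l (g b))"
      using that assms(2,3) by (intro B) auto
    also have "\<dots> = (\<Sum>l<card T. u (f a) (e l) * v (e l) (g b))"
      using sum.reindex_bij_betw[OF e, of "\<lambda>l. u (f a) l * v l (g b)"] by simp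
    finally show ?thesis .
  qed
  then have "detk k (\<lambda>a b. B (f a) (g b)) = detk k (\<lambda>a b. \<Sum>l<card T. u (f a) (e l) * v (e l) (g b))"
    by (rule detk_cong)
  also have "\<dots> = 0"
    using T(2) by (rule detk_mult_inner_less_eq_0)
  finally show ?thesis .
qed

lemma rank_less_diag_product:
  fixes u v :: "nat \<Rightarrow> nat \<Rightarrow> complex" and c :: "nat \<Rightarrow> complex"
  assumes "\<And>i j. i < nr \<Longrightarrow> j < nc \<Longrightarrow> B i j = (\<Sum>l<n. u i l * c l * v l j)"
  shows "rank_less (card {l. l < n \<and> c l \<noteq> 0} + 1) nr nc B"
proof (rule rank_lessI[where u = "\<lambda>i l. u i l * c l" and v = v])
  fix i j assume "i < nr" "j < nc"
  then have "B i j = (\<Sum>l<n. u i l * c l * v l j)"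
    by (rule assms)
  also have "\<dots> = (\<Sum>l\<in>{l. l < n \<and> c l \<noteq> 0}. u i l * c l * v l j)"
    by (rule sum.mono_neutral_right) auto
  finally show "B i j = (\<Sum>l\<in>{l. l < n \<and> c l \<noteq> 0}. (u i l * c l) * v l j)" .
qed simp_all

lemma netmat_eq_sum:
  assumes "i < n2" "j < n0"
  shows "netmat n0 n1 n2 A W1 W2 i j =
    (\<Sum>l<n1. complex_of_real (W2 i l) * of_bool (A l) * complex_of_real (W1 l j))"
  unfolding netmat_def if_P[OF conjI[OF assms]] of_real_sum
  by (intro sum.cong refl) (simp add: of_bool_def)

lemma rank_less_netmat:
  "rank_less (card {l. l < n1 \<and> A l} + 1) n2 n0 (netmat n0 n1 n2 A W1 W2)"
proof -
  have "rank_less (card {l. l < n1 \<and> of_bool (A l) \<noteq> (0 :: complex)} + 1) n2 n0 (netmat n0 n1 n2 A W1 W2)"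
    by (rule rank_less_diag_product) (rule netmat_eq_sum)
  then show ?thesis by simp
qed

lemma param_imageE:
  assumes "y \<in> param_image n0 n1 n2 A1 A2"
  obtains W1 W2 where "y = (netmat n0 n1 n2 A1 W1 W2, netmat n0 n1 n2 A2 W1 W2)"
  using assms unfolding param_image_def by blast

lemma rank_less_M1_param_image:
  "y \<in> param_image n0 n1 n2 A1 A2 \<Longrightarrow> rank_less (card {l. l < n1 \<and> A1 l} + 1) n2 n0 (M1 y)"
  by (elim param_imageE) (simp only: M1_def fst_conv rank_less_netmat)

lemma rank_less_M2_param_image:
  "y \<in> param_image n0 n1 n2 A1 A2 \<Longrightarrow> rank_less (card {l. l < n1 \<and> A2 l} + 1) n2 n0 (M2 y)"
  by (elim param_imageE) (simp only: M2_def snd_conv rank_less_netmat)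

lemma rank_less_hcat_param_image:
  assumes "y \<in> param_image n0 n1 n2 A1 A2"
  shows "rank_less (n1 + 1) n2 (2 * n0) (hcat n0 y)"
proof -
  obtain W1 W2 where y: "y = (netmat n0 n1 n2 A1 W1 W2, netmat n0 n1 n2 A2 W1 W2)"
    using assms by (rule param_imageE)
  show ?thesis
    by (rule rank_lessI[where T = "{..<n1}" and u = "\<lambda>i l. complex_of_real (W2 i l)"
          and v = "\<lambda>l j. if j < n0 then of_bool (A1 l) * complex_of_real (W1 l j)
                       else of_bool (A2 l) * complex_of_real (W1 l (j - n0))"])
       (auto simp: y hcat_def M1_def M2_def netmat_eq_sum mult.assoc)
qed

lemma rank_less_hcatT_param_image:
  assumes "y \<in> param_image n0 n1 n2 A1 A2"
  shows "rank_less (n1 + 1) n0 (2 * n2) (hcatT n2 y)"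
proof -
  obtain W1 W2 where y: "y = (netmat n0 n1 n2 A1 W1 W2, netmat n0 n1 n2 A2 W1 W2)"
    using assms by (rule param_imageE)
  show ?thesis
    by (rule rank_lessI[where T = "{..<n1}" and u = "\<lambda>i l. complex_of_real (W1 l i)"
          and v = "\<lambda>l j. if j < n2 then of_bool (A1 l) * complex_of_real (W2 j l)
                       else of_bool (A2 l) * complex_of_real (W2 (j - n2) l)"])
       (auto simp: y hcatT_def M1_def M2_def netmat_eq_sum mult_ac)
qed

lemma rank_less_Mdiff_param_image:
  assumes "y \<in> param_image n0 n1 n2 A1 A2"
  shows "rank_less (card {l. l < n1 \<and> A1 l \<noteq> A2 l} + 1) n2 n0 (Mdiff y)"
proof -
  obtain W1 W2 where y: "y = (netmat n0 n1 n2 A1 W1 W2, netmat n0 n1 n2 A2 W1 W2)"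
    using assms by (rule param_imageE)
  have "rank_less (card {l. l < n1 \<and> of_bool (A1 l) - of_bool (A2 l) \<noteq> (0 :: complex)} + 1) n2 n0 (Mdiff y)"
  proof (rule rank_less_diag_product)
    fix i j assume "i < n2" "j < n0"
    then show "Mdiff y i j =
      (\<Sum>l<n1. complex_of_real (W2 i l) * (of_bool (A1 l) - of_bool (A2 l)) * complex_of_real (W1 l j))"
      by (simp add: y Mdiff_def M1_def M2_def netmat_eq_sum sum_subtractf[symmetric]
          left_diff_distrib right_diff_distrib)
  qed
  then show ?thesis
    by (simp add: of_bool_eq_iff)
qed

lemma card_sym_diff:
  assumes "finite A" "finite B"
  shows "card (sym_diff A B) = card A + card B - 2 * card (A \<inter> B)"
proof -
  have "card (sym_diff A B) = card ((A \<union> B) - (A \<inter> B))"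
    by (rule arg_cong[where f = card]) blast
  also have "\<dots> = card (A \<union> B) - card (A \<inter> B)"
    using assms by (intro card_Diff_subset) auto
  also have "\<dots> = card A + card B - 2 * card (A \<inter> B)"
    using card_Un_Int[OF assms] by simp
  finally show ?thesis .
qed

lemma vanishing_ideal_zariski_closureI:
  assumes "p \<in> polyfun m n" "\<And>y. y \<in> S \<Longrightarrow> p y = 0"
  shows "p \<in> vanishing_ideal m n (zariski_closure m n S)"
  using assms unfolding vanishing_ideal_def zariski_closure_def by blast

lemma minors_subset_vanishing_ideal:
  assumes "\<And>i j. i < nr \<Longrightarrow> j < nc \<Longrightarrow> (\<lambda>x. F x i j) \<in> polyfun m n"
    and "\<And>y. y \<in> S \<Longrightarrow> rank_less k nr nc (F y)"
  shows "minors k nr nc F \<subseteq> vanishing_ideal m n (zariski_closure m n S)"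
proof
  fix p assume "p \<in> minors k nr nc F"
  then obtain f g where p: "p = (\<lambda>x. detk k (\<lambda>a b. F x (f a) (g b)))"
    and f: "f ` {..<k} \<subseteq> {..<nr}" and g: "g ` {..<k} \<subseteq> {..<nc}"
    unfolding minors_def by blast
  show "p \<in> vanishing_ideal m n (zariski_closure m n S)"
  proof (rule vanishing_ideal_zariski_closureI)
    show "p \<in> polyfun m n"
      unfolding p using f g by (intro polyfun_detk assms(1)) auto
    show "p y = 0" if "y \<in> S" for y
      unfolding p using assms(2)[OF that] f g by (rule minor_eq_0_if_rank_less)
  qed
qed

theorem theorem6p2:
  fixes n0 n1 n2 :: nat and A1 A2 :: "nat \<Rightarrow> bool"
  defines "r1 \<equiv> card {j. j < n1 \<and> A1 j}"
      and "r2 \<equiv> card {j. j < n1 \<and> A2 j}"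
      and "s \<equiv> card {j. j < n1 \<and> A1 j \<and> A2 j}"
  defines "t \<equiv> r1 + r2 - 2 * s"
  defines "J \<equiv> J_ideal n0 n1 n2 A1 A2"
  shows "minors (r1 + 1) n2 n0 M1 \<subseteq> J \<and>
         minors (r2 + 1) n2 n0 M2 \<subseteq> J \<and>
         minors (n1 + 1) n2 (2 * n0) (hcat n0) \<subseteq> J \<and>
         minors (n1 + 1) n0 (2 * n2) (hcatT n2) \<subseteq> J \<and>
         minors (t + 1) n2 n0 Mdiff \<subseteq> J"
proof -
  have "sym_diff {j. j < n1 \<and> A1 j} {j. j < n1 \<and> A2 j} = {l. l < n1 \<and> A1 l \<noteq> A2 l}"
    and "{j. j < n1 \<and> A1 j} \<inter> {j. j < n1 \<and> A2 j} = {j. j < n1 \<and> A1 j \<and> A2 j}"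
    by auto
  then have t: "t = card {l. l < n1 \<and> A1 l \<noteq> A2 l}"
    using card_sym_diff[of "{j. j < n1 \<and> A1 j}" "{j. j < n1 \<and> A2 j}"]
    unfolding t_def r1_def r2_def s_def by simp
  show ?thesis
    unfolding J_def J_ideal_def t r1_def r2_def
    by (intro conjI minors_subset_vanishing_ideal
        polyfun_M1 polyfun_M2 polyfun_hcat polyfun_hcatT polyfun_Mdiff
        rank_less_M1_param_image rank_less_M2_param_image rank_less_hcat_param_image
        rank_less_hcatT_param_image rank_less_Mdiff_param_image)
qed

end
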